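(* Let $X\subseteq\mathbb{R}^d$ be a finite set of base points and let $DG$ be the Delaunay graph constructed on $X$. If any single edge $\{u,v\}$ is removed from $DG$ (giving a graph $G'$), then there exists a query $q\in\mathbb{R}^d$ such that the $2$-Neighboring Graph $NG_{2,q}$ of $q$ in $G'$ consists of two isolated vertices (i.e., has no edges).
   Context: Delaunay graph $DG$ on $X$: two points $u,v\in X$ are joined by an edge if and only if there exists a sphere passing through $u$ and $v$ with no other point of $X$ inside it; as a graph index, each undirected edge is treated as a pair of directed edges in both directions, and removing the edge removes both directions. For a query $q$, $N_{i,q}$ denotes the $i$-th nearest neighbour of $q$ in $X$ (with respect to the distance $\delta$). For a directed graph $G=(V,E)$ on $X$, $NG_{S,q}$ is the subgraph of $G$ induced by $\{N_{1,q},\dots,N_{S,q}\}$. *)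

theory Defs
  imports "HOL-Analysis.Analysis"
begin

text \<open>Directed graphs on a point set are represented by their set of directed edges.
  Points live in an arbitrary Euclidean space 'a (playing the role of R^d), with the
  Euclidean distance dist.\<close>

definition delaunay_graph :: "'a::euclidean_space set \<Rightarrow> ('a \<times> 'a) set" where
  "delaunay_graph X = {(u, v). u \<in> X \<and> v \<in> X \<and> u \<noteq> v \<and>
      (\<exists>c r. dist c u = r \<and> dist c v = r \<and> (\<forall>w \<in> X - {u, v}. r < dist c w))}"

definition remove_edge :: "('a \<times> 'a) set \<Rightarrow> 'a \<Rightarrow> 'a \<Rightarrow> ('a \<times> 'a) set" where
  "remove_edge E u v = E - {(u, v), (v, u)}"

definition nearest_set :: "'a::euclidean_space set \<Rightarrow> 'a \<Rightarrow> nat \<Rightarrow> 'a set \<Rightarrow> bool" where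
  "nearest_set X q k S \<longleftrightarrow> S \<subseteq> X \<and> card S = k \<and>
      (\<forall>s \<in> S. \<forall>w \<in> X - S. dist q s < dist q w)"

definition induced_subgraph :: "('a \<times> 'a) set \<Rightarrow> 'a set \<Rightarrow> ('a \<times> 'a) set" where
  "induced_subgraph E S = E \<inter> (S \<times> S)"

end

theory Submission
  imports Defs
begin

text \<open>The centre of an empty sphere through u and v is a query whose two nearest neighbours
  are exactly u and v. The Delaunay graph has no loops, so once the edge between u and v is
  removed, the subgraph induced on {u, v} has no edges left.\<close>

lemma delaunay_graph_irrefl: "(x, x) \<notin> delaunay_graph X"
  unfolding delaunay_graph_def by simp

lemma induced_subgraph_remove_edge_empty:
  assumes "\<And>x. (x, x) \<notin> E"
  shows "induced_subgraph (remove_edge E u v) {u, v} = {}"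
  using assms unfolding induced_subgraph_def remove_edge_def by auto

lemma delaunay_edge_nearest_pair:
  assumes "(u, v) \<in> delaunay_graph X"
  shows "\<exists>q. nearest_set X q 2 {u, v}"
proof -
  obtain c r where "u \<in> X" "v \<in> X" "u \<noteq> v" "dist c u = r" "dist c v = r"
    and "\<forall>w \<in> X - {u, v}. r < dist c w"
    using assms unfolding delaunay_graph_def by blast
  then have "nearest_set X c 2 {u, v}"
    unfolding nearest_set_def by auto
  then show ?thesis ..
qed

theorem theorem4p3:
  fixes X :: "'a::euclidean_space set" and u v :: 'a
  assumes "finite X"
    and "(u, v) \<in> delaunay_graph X"
  shows "\<exists>q S. nearest_set X q 2 S \<and>
           induced_subgraph (remove_edge (delaunay_graph X) u v) S = {}"
proof -
  obtain q where "nearest_set X q 2 {u, v}"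
    using delaunay_edge_nearest_pair [OF assms(2)] ..
  moreover have "induced_subgraph (remove_edge (delaunay_graph X) u v) {u, v} = {}"
    using delaunay_graph_irrefl by (rule induced_subgraph_remove_edge_empty)
  ultimately show ?thesis by blast
qed

end
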